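(* Let $\mathcal N$ be an indecomposable Clifford Nil-algebra of rank $4$ with nilpotency index $NI(\mathcal N)=1$. Then $\mathcal N$ is equivalent either to one of the following quasiNil-algebras, or to the dual of one of them: (i) $\mathcal N_{12}=V_1$, $\mathcal N_{13}=V_2$, $\mathcal N_{14}=V_3$, all other $\mathcal N_{ij}=0$; (ii) $\mathcal N_{13}=V_1$, $\mathcal N_{14}=V_2$, $\mathcal N_{24}=V_3$, all other $\mathcal N_{ij}=0$; (iii) $\mathcal N_{13}=V_1$, $\mathcal N_{14}=V_2$, $\mathcal N_{23}=V_3$, $\mathcal N_{24}=V_4$, all other $\mathcal N_{ij}=0$. Here $V_1,\dots,V_4$ are arbitrary nonzero Euclidean spaces and all products $\mu_{ijk}$ are zero. Conversely, each of (i)–(iii) is an indecomposable Clifford Nil-algebra of rank 4 with $NI=1$.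
   Context: All vector spaces are finite-dimensional real. A bilinear map $\mu:X\times Y\to Z$ of Euclidean spaces is isometric if $|\mu(x,y)|=|x|\,|y|$. For a Euclidean space $V$, $\mathrm{Cl}(V)$ is the Clifford algebra with $v\cdot v=-|v|^2$. A "$\mathrm{Cl}(V)$-module $S^0\oplus S^1$" always means a $\mathbb Z/2$-graded $\mathrm{Cl}(V)$-module ($V\cdot S^0\subset S^1$, $V\cdot S^1\subset S^0$) with an admissible Euclidean metric: $S^0\perp S^1$ and every $v\in V$ acts skew-symmetrically (so $|v\cdot s|=|v||s|$); the maps $V\times S^0\to S^1,(v,s)\mapsto v\cdot s$ and $S^0\times V\to S^1,(s,v)\mapsto v\cdot s$ are called Clifford multiplications. A quasiNil-algebra of rank $n$ is a Euclidean space $\mathcal N$ with an orthogonal decomposition $\mathcal N=\bigoplus_{1\le i<j\le n}\mathcal N_{ij}$ and bilinear isometric maps $\mu_{ijk}:\mathcal N_{ij}\times\mathcal N_{jk}\to\mathcal N_{ik}$ ($i<j<k$; $\mu_{ijk}=0$ iff one factor is $0$); elements are strictly upper triangular matrices $A=(a_{ij})$, $a_{ij}\in\mathcal N_{ij}$, with product $(AB)_{ik}=\sum_{i<j<k}\mu_{ijk}(a_{ij},b_{jk})$. It is Clifford if every nonzero $\mu_{ijk}$ is a Clifford multiplication (either $\mathcal N_{jk}\oplus\mathcal N_{ik}$ is a $\mathrm{Cl}(\mathcal N_{ij})$-module with $\mu_{ijk}(x,y)=x\cdot y$, or $\mathcal N_{ij}\oplus\mathcal N_{ik}$ is a $\mathrm{Cl}(\mathcal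 N_{jk})$-module with $\mu_{ijk}(x,y)=y\cdot x$). A Nil-algebra is an associative quasiNil-algebra satisfying the Vinberg condition: for all $l<i<j<k$, $a\in\mathcal N_{ik}$, $b\in\mathcal N_{jk}$, if $\langle a,\mu_{ijk}(x,b)\rangle=0$ for all $x\in\mathcal N_{ij}$ then $\langle\mu_{lik}(y,a),\mu_{ljk}(z,b)\rangle=0$ for all $y\in\mathcal N_{li},z\in\mathcal N_{lj}$. The nilpotency index $NI(\mathcal N)$ is the largest $m$ such that there are $i_0<i_1<\dots<i_m$ with $\mathcal N_{i_{r-1}i_r}\neq0$ for all $r$. An isomorphism is a linear isometry preserving each $\mathcal N_{ij}$ and all products. A renumbering by a permutation $\sigma$ with $\sigma(i)<\sigma(j)$ whenever $\mathcal N_{ij}\ne0$ sets $\mathcal N'_{\sigma(i)\sigma(j)}=\mathcal N_{ij}$ with the transported products; two quasiNil-algebras are equivalent if they are isomorphic after a renumbering. The dual $\mathcal N^\tau$ has $\mathcal N^\tau_{ij}=\mathcal N_{n+1-j,\,n+1-i}$ and $\mu^\tau_{ijk}(x,y)=\mu_{n+1-k,\,n+1-j,\,n+1-i}(y,x)$. A direct sum of quasiNil-algebras of ranks $n',n''$ is the rank $n'+n''$ block-diagonal quasiNil-algebra; $\mathcal N$ is indecomposable if it is not equivalent to a direct sum of two quasiNil-algebras of positive rank. *)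

theory Defs
  imports Complex_Main
begin

text \<open>Every finite-dimensional Euclidean space is isometric to standard
  R^d; we represent the Euclidean space N_ij by the dimension d i j, with vectors
  the functions nat => real vanishing from index d on, and the standard inner product.
  Indices of a rank n quasiNil-algebra range over {1..n}.\<close>

type_synonym rvec = "nat \<Rightarrow> real"
type_synonym dimfam = "nat \<Rightarrow> nat \<Rightarrow> nat"
type_synonym mulfam = "nat \<Rightarrow> nat \<Rightarrow> nat \<Rightarrow> rvec \<Rightarrow> rvec \<Rightarrow> rvec"

definition vecs :: "nat \<Rightarrow> rvec set" where
  "vecs d = {x. \<forall>t\<ge>d. x t = 0}"

definition ip :: "nat \<Rightarrow> rvec \<Rightarrow> rvec \<Rightarrow> real" where
  "ip d x y = (\<Sum>t<d. x t * y t)"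

definition nrm :: "nat \<Rightarrow> rvec \<Rightarrow> real" where
  "nrm d x = sqrt (ip d x x)"

definition vadd :: "rvec \<Rightarrow> rvec \<Rightarrow> rvec" where
  "vadd x y = (\<lambda>t. x t + y t)"

definition vscale :: "real \<Rightarrow> rvec \<Rightarrow> rvec" where
  "vscale r x = (\<lambda>t. r * x t)"

definition vzero :: rvec where "vzero = (\<lambda>t. 0)"

definition linear_on :: "nat \<Rightarrow> nat \<Rightarrow> (rvec \<Rightarrow> rvec) \<Rightarrow> bool" where
  "linear_on a c f \<longleftrightarrow>
     (\<forall>x\<in>vecs a. f x \<in> vecs c) \<and>
     (\<forall>x\<in>vecs a. \<forall>x'\<in>vecs a. f (vadd x x') = vadd (f x) (f x')) \<and>
     (\<forall>r. \<forall>x\<in>vecs a. f (vscale r x) = vscale r (f x))"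

definition bilinear_on :: "nat \<Rightarrow> nat \<Rightarrow> nat \<Rightarrow> (rvec \<Rightarrow> rvec \<Rightarrow> rvec) \<Rightarrow> bool" where
  "bilinear_on a b c m \<longleftrightarrow>
     (\<forall>x\<in>vecs a. \<forall>y\<in>vecs b. m x y \<in> vecs c) \<and>
     (\<forall>x\<in>vecs a. \<forall>x'\<in>vecs a. \<forall>y\<in>vecs b. m (vadd x x') y = vadd (m x y) (m x' y)) \<and>
     (\<forall>r. \<forall>x\<in>vecs a. \<forall>y\<in>vecs b. m (vscale r x) y = vscale r (m x y)) \<and>
     (\<forall>x\<in>vecs a. \<forall>y\<in>vecs b. \<forall>y'\<in>vecs b. m x (vadd y y') = vadd (m x y) (m x y')) \<and>
     (\<forall>r. \<forall>x\<in>vecs a. \<forall>y\<in>vecs b. m x (vscale r y) = vscale r (m x y))"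

definition isometric_on :: "nat \<Rightarrow> nat \<Rightarrow> nat \<Rightarrow> (rvec \<Rightarrow> rvec \<Rightarrow> rvec) \<Rightarrow> bool" where
  "isometric_on a b c m \<longleftrightarrow> bilinear_on a b c m \<and>
     (\<forall>x\<in>vecs a. \<forall>y\<in>vecs b. nrm c (m x y) = nrm a x * nrm b y)"

definition quasiNil :: "nat \<Rightarrow> dimfam \<Rightarrow> mulfam \<Rightarrow> bool" where
  "quasiNil n d \<mu> \<longleftrightarrow> (\<forall>i j k. 1 \<le> i \<and> i < j \<and> j < k \<and> k \<le> n \<longrightarrow>
      isometric_on (d i j) (d j k) (d i k) (\<mu> i j k) \<and>
      ((\<forall>x\<in>vecs (d i j). \<forall>y\<in>vecs (d j k). \<mu> i j k x y = vzero) \<longleftrightarrow> (d i j = 0 \<or> d j k = 0)))"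

text \<open>m : V x S0 -> S1 is a Clifford multiplication: there is a Z/2-graded Cl(V)-module
  structure on the orthogonal sum S0 + S1 with admissible metric whose action
  V x S0 -> S1 is m. The action is rho(v)(s0,s1) = (c v s1, m v s0); we require
  rho(v)^2 = -|v|^2 and rho(v) skew-symmetric.\<close>
definition clifford_mult :: "nat \<Rightarrow> nat \<Rightarrow> nat \<Rightarrow> (rvec \<Rightarrow> rvec \<Rightarrow> rvec) \<Rightarrow> bool" where
  "clifford_mult dV d0 d1 m \<longleftrightarrow> bilinear_on dV d0 d1 m \<and>
     (\<exists>c. bilinear_on dV d1 d0 c \<and>
       (\<forall>v\<in>vecs dV.
          (\<forall>s\<in>vecs d0. c v (m v s) = vscale (- (nrm dV v)\<^sup>2) s) \<and>
          (\<forall>s\<in>vecs d1. m v (c v s) = vscale (- (nrm dV v)\<^sup>2) s) \<and>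
          (\<forall>s0\<in>vecs d0. \<forall>s1\<in>vecs d1. ip d1 (m v s0) s1 = - ip d0 s0 (c v s1))))"

definition clifford :: "nat \<Rightarrow> dimfam \<Rightarrow> mulfam \<Rightarrow> bool" where
  "clifford n d \<mu> \<longleftrightarrow> (\<forall>i j k. 1 \<le> i \<and> i < j \<and> j < k \<and> k \<le> n \<and> d i j \<noteq> 0 \<and> d j k \<noteq> 0 \<longrightarrow>
      clifford_mult (d i j) (d j k) (d i k) (\<mu> i j k) \<or>
      clifford_mult (d j k) (d i j) (d i k) (\<lambda>y x. \<mu> i j k x y))"

text \<open>elements: strictly upper triangular matrices\<close>
definition element :: "nat \<Rightarrow> dimfam \<Rightarrow> (nat \<Rightarrow> nat \<Rightarrow> rvec) \<Rightarrow> bool" where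
  "element n d A \<longleftrightarrow> (\<forall>i j. 1 \<le> i \<and> i < j \<and> j \<le> n \<longrightarrow> A i j \<in> vecs (d i j))"

definition mprod :: "mulfam \<Rightarrow> (nat \<Rightarrow> nat \<Rightarrow> rvec) \<Rightarrow> (nat \<Rightarrow> nat \<Rightarrow> rvec) \<Rightarrow> nat \<Rightarrow> nat \<Rightarrow> rvec" where
  "mprod \<mu> A B i k = (\<lambda>t. \<Sum>j\<in>{i<..<k}. \<mu> i j k (A i j) (B j k) t)"

definition associative :: "nat \<Rightarrow> dimfam \<Rightarrow> mulfam \<Rightarrow> bool" where
  "associative n d \<mu> \<longleftrightarrow> (\<forall>A B C. element n d A \<and> element n d B \<and> element n d C \<longrightarrow>
     (\<forall>i k. 1 \<le> i \<and> i < k \<and> k \<le> n \<longrightarrow>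
        mprod \<mu> (mprod \<mu> A B) C i k = mprod \<mu> A (mprod \<mu> B C) i k))"

definition vinberg :: "nat \<Rightarrow> dimfam \<Rightarrow> mulfam \<Rightarrow> bool" where
  "vinberg n d \<mu> \<longleftrightarrow> (\<forall>l i j k. 1 \<le> l \<and> l < i \<and> i < j \<and> j < k \<and> k \<le> n \<longrightarrow>
     (\<forall>a\<in>vecs (d i k). \<forall>b\<in>vecs (d j k).
        (\<forall>x\<in>vecs (d i j). ip (d i k) a (\<mu> i j k x b) = 0) \<longrightarrow>
        (\<forall>y\<in>vecs (d l i). \<forall>z\<in>vecs (d l j). ip (d l k) (\<mu> l i k y a) (\<mu> l j k z b) = 0)))"

definition nil_algebra :: "nat \<Rightarrow> dimfam \<Rightarrow> mulfam \<Rightarrow> bool" where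
  "nil_algebra n d \<mu> \<longleftrightarrow> quasiNil n d \<mu> \<and> associative n d \<mu> \<and> vinberg n d \<mu>"

definition clifford_nil_algebra :: "nat \<Rightarrow> dimfam \<Rightarrow> mulfam \<Rightarrow> bool" where
  "clifford_nil_algebra n d \<mu> \<longleftrightarrow> nil_algebra n d \<mu> \<and> clifford n d \<mu>"

definition nil_index :: "nat \<Rightarrow> dimfam \<Rightarrow> nat" where
  "nil_index n d = (GREATEST m. \<exists>\<iota>::nat \<Rightarrow> nat.
      (\<forall>r\<le>m. 1 \<le> \<iota> r \<and> \<iota> r \<le> n) \<and>
      (\<forall>r<m. \<iota> r < \<iota> (Suc r) \<and> d (\<iota> r) (\<iota> (Suc r)) \<noteq> 0))"

definition isomorphic :: "nat \<Rightarrow> dimfam \<Rightarrow> mulfam \<Rightarrow> dimfam \<Rightarrow> mulfam \<Rightarrow> bool" where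
  "isomorphic n d \<mu> d' \<mu>' \<longleftrightarrow> (\<exists>\<phi> :: nat \<Rightarrow> nat \<Rightarrow> rvec \<Rightarrow> rvec.
     (\<forall>i j. 1 \<le> i \<and> i < j \<and> j \<le> n \<longrightarrow>
        linear_on (d i j) (d' i j) (\<phi> i j) \<and>
        bij_betw (\<phi> i j) (vecs (d i j)) (vecs (d' i j)) \<and>
        (\<forall>x\<in>vecs (d i j). nrm (d' i j) (\<phi> i j x) = nrm (d i j) x)) \<and>
     (\<forall>i j k. 1 \<le> i \<and> i < j \<and> j < k \<and> k \<le> n \<longrightarrow>
        (\<forall>x\<in>vecs (d i j). \<forall>y\<in>vecs (d j k).
           \<phi> i k (\<mu> i j k x y) = \<mu>' i j k (\<phi> i j x) (\<phi> j k y))))"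

definition renumbering :: "nat \<Rightarrow> dimfam \<Rightarrow> (nat \<Rightarrow> nat) \<Rightarrow> bool" where
  "renumbering n d \<sigma> \<longleftrightarrow> bij_betw \<sigma> {1..n} {1..n} \<and>
     (\<forall>i j. 1 \<le> i \<and> i < j \<and> j \<le> n \<and> d i j \<noteq> 0 \<longrightarrow> \<sigma> i < \<sigma> j)"

definition renum_d :: "nat \<Rightarrow> (nat \<Rightarrow> nat) \<Rightarrow> dimfam \<Rightarrow> dimfam" where
  "renum_d n \<sigma> d p q = (let i = inv_into {1..n} \<sigma> p; j = inv_into {1..n} \<sigma> q in
      if i < j then d i j else 0)"

definition renum_mu :: "nat \<Rightarrow> (nat \<Rightarrow> nat) \<Rightarrow> mulfam \<Rightarrow> mulfam" where
  "renum_mu n \<sigma> \<mu> p q r = (let i = inv_into {1..n} \<sigma> p; j = inv_into {1..n} \<sigma> q;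
      k = inv_into {1..n} \<sigma> r in
      if i < j \<and> j < k then \<mu> i j k else (\<lambda>x y. vzero))"

definition equivalent :: "nat \<Rightarrow> dimfam \<Rightarrow> mulfam \<Rightarrow> dimfam \<Rightarrow> mulfam \<Rightarrow> bool" where
  "equivalent n d \<mu> d' \<mu>' \<longleftrightarrow> (\<exists>\<sigma>. renumbering n d \<sigma> \<and>
      isomorphic n (renum_d n \<sigma> d) (renum_mu n \<sigma> \<mu>) d' \<mu>')"

definition dual_d :: "nat \<Rightarrow> dimfam \<Rightarrow> dimfam" where
  "dual_d n d i j = d (n + 1 - j) (n + 1 - i)"

definition dual_mu :: "nat \<Rightarrow> mulfam \<Rightarrow> mulfam" where
  "dual_mu n \<mu> i j k x y = \<mu> (n + 1 - k) (n + 1 - j) (n + 1 - i) y x"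

definition dsum_d :: "nat \<Rightarrow> dimfam \<Rightarrow> dimfam \<Rightarrow> dimfam" where
  "dsum_d n1 d1 d2 i j = (if j \<le> n1 then d1 i j
      else if n1 < i then d2 (i - n1) (j - n1) else 0)"

definition dsum_mu :: "nat \<Rightarrow> mulfam \<Rightarrow> mulfam \<Rightarrow> mulfam" where
  "dsum_mu n1 \<mu>1 \<mu>2 i j k = (if k \<le> n1 then \<mu>1 i j k
      else if n1 < i then \<mu>2 (i - n1) (j - n1) (k - n1) else (\<lambda>x y. vzero))"

definition indecomposable :: "nat \<Rightarrow> dimfam \<Rightarrow> mulfam \<Rightarrow> bool" where
  "indecomposable n d \<mu> \<longleftrightarrow> \<not> (\<exists>n1 d1 \<mu>1 n2 d2 \<mu>2.
      0 < n1 \<and> 0 < n2 \<and> n = n1 + n2 \<and> quasiNil n1 d1 \<mu>1 \<and> quasiNil n2 d2 \<mu>2 \<and>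
      equivalent n d \<mu> (dsum_d n1 d1 d2) (dsum_mu n1 \<mu>1 \<mu>2))"

definition zero_mu :: mulfam where "zero_mu i j k x y = vzero"

definition pat1 :: "nat \<Rightarrow> nat \<Rightarrow> nat \<Rightarrow> dimfam" where
  "pat1 v1 v2 v3 i j = (if (i, j) = (1, 2) then v1 else if (i, j) = (1, 3) then v2
      else if (i, j) = (1, 4) then v3 else 0)"

definition pat2 :: "nat \<Rightarrow> nat \<Rightarrow> nat \<Rightarrow> dimfam" where
  "pat2 v1 v2 v3 i j = (if (i, j) = (1, 3) then v1 else if (i, j) = (1, 4) then v2
      else if (i, j) = (2, 4) then v3 else 0)"

definition pat3 :: "nat \<Rightarrow> nat \<Rightarrow> nat \<Rightarrow> nat \<Rightarrow> dimfam" where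
  "pat3 v1 v2 v3 v4 i j = (if (i, j) = (1, 3) then v1 else if (i, j) = (1, 4) then v2
      else if (i, j) = (2, 3) then v3 else if (i, j) = (2, 4) then v4 else 0)"

definition equiv_or_dual :: "nat \<Rightarrow> dimfam \<Rightarrow> mulfam \<Rightarrow> dimfam \<Rightarrow> mulfam \<Rightarrow> bool" where
  "equiv_or_dual n d \<mu> d' \<mu>' \<longleftrightarrow>
     equivalent n d \<mu> d' \<mu>' \<or> equivalent n d \<mu> (dual_d n d') (dual_mu n \<mu>')"

end

(* Nilpotency index 1 means that no two nonzero blocks N_ij and N_jk are composable, so every
   product vanishes and the algebra is determined, up to isomorphism, by its support: the graph
   of the pairs i < j with N_ij nonzero.  Renumberings act on the support by order-compatible
   relabellings.  A relabelling that makes the support block diagonal exhibits a decomposition,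
   whereas a connected support forces indecomposability.  A finite check over the 64 possible
   supports on four vertices shows that every support without composable pairs can be relabelled
   either into block-diagonal form or onto the support of (i), of the dual of (i), of (ii) or of
   (iii). *)

theory Submission
  imports Defs
begin

definition chain_free :: "nat \<Rightarrow> dimfam \<Rightarrow> bool" where
  "chain_free n d \<longleftrightarrow>
     (\<forall>i\<in>{1..n}. \<forall>j\<in>{1..n}. \<forall>k\<in>{1..n}. i < j \<and> j < k \<longrightarrow> d i j = 0 \<or> d j k = 0)"

lemma chain_freeD:
  assumes "chain_free n d" "1 \<le> i" "i < j" "j < k" "k \<le> n"
  shows "d i j = 0 \<or> d j k = 0"
  using assms unfolding chain_free_def by auto

lemma chain_free_mono:
  assumes "chain_free n d" "m \<le> n"
  shows "chain_free m d"
  using assms unfolding chain_free_def by auto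

lemma chain_free_shift:
  assumes "chain_free n d"
  shows "chain_free (n - m) (\<lambda>i j. d (i + m) (j + m))"
  unfolding chain_free_def
proof (intro ballI impI)
  fix i j k assume "i \<in> {1..n - m}" "j \<in> {1..n - m}" "k \<in> {1..n - m}" "i < j \<and> j < k"
  then show "d (i + m) (j + m) = 0 \<or> d (j + m) (k + m) = 0"
    using chain_freeD[OF assms, of "i + m" "j + m" "k + m"] by auto
qed

(* For sigma the inverse of tau, relabel tau d is renum_d n sigma d: block (p, q) of the
   renumbered algebra is block (tau p, tau q) of the original one. *)
definition relabel :: "(nat \<Rightarrow> nat) \<Rightarrow> dimfam \<Rightarrow> dimfam" where
  "relabel \<tau> d p q = (if \<tau> p < \<tau> q then d (\<tau> p) (\<tau> q) else 0)"

definition order_compatible :: "nat \<Rightarrow> (nat \<Rightarrow> nat) \<Rightarrow> dimfam \<Rightarrow> bool" where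
  "order_compatible n \<tau> d \<longleftrightarrow>
     (\<forall>p\<in>{1..n}. \<forall>q\<in>{1..n}. \<tau> p < \<tau> q \<and> d (\<tau> p) (\<tau> q) \<noteq> 0 \<longrightarrow> p < q)"

lemma chain_free_relabel:
  assumes "chain_free n d" "\<tau> ` {1..n} \<subseteq> {1..n}"
  shows "chain_free n (relabel \<tau> d)"
  using assms unfolding chain_free_def relabel_def by (auto simp: image_subset_iff)

lemma mu_eq_vzero_if_chain_free:
  assumes "quasiNil n d \<mu>" "chain_free n d"
    and "i \<in> {1..n}" "k \<in> {1..n}" "i < j" "j < k" "x \<in> vecs (d i j)" "y \<in> vecs (d j k)"
  shows "\<mu> i j k x y = vzero"
  using assms unfolding quasiNil_def chain_free_def by auto

lemma nrm_vzero: "nrm d vzero = 0"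
  by (simp add: nrm_def ip_def vzero_def)

lemma nrm_dim0: "nrm 0 x = 0"
  by (simp add: nrm_def ip_def)

lemma quasiNil_zero_mu:
  assumes "chain_free n d"
  shows "quasiNil n d zero_mu"
  unfolding quasiNil_def
proof (intro allI impI conjI)
  fix i j k assume ijk: "1 \<le> i \<and> i < j \<and> j < k \<and> k \<le> n"
  then have zero: "d i j = 0 \<or> d j k = 0"
    using chain_freeD[OF assms, of i j k] by simp
  have "bilinear_on (d i j) (d j k) (d i k) (zero_mu i j k)"
    by (simp add: bilinear_on_def zero_mu_def vecs_def vzero_def vadd_def vscale_def)
  moreover have "nrm (d i k) vzero = nrm (d i j) x * nrm (d j k) y" for x y
    using zero by (auto simp: nrm_vzero nrm_dim0)
  ultimately show "isometric_on (d i j) (d j k) (d i k) (zero_mu i j k)"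
    by (simp add: isometric_on_def zero_mu_def)
  show "(\<forall>x\<in>vecs (d i j). \<forall>y\<in>vecs (d j k). zero_mu i j k x y = vzero) = (d i j = 0 \<or> d j k = 0)"
    using zero by (simp add: zero_mu_def)
qed

lemma clifford_nil_algebra_zero_mu:
  assumes "chain_free n d"
  shows "clifford_nil_algebra n d zero_mu"
proof -
  have "mprod zero_mu A B = (\<lambda>i k. vzero)" for A B
    by (simp add: mprod_def zero_mu_def vzero_def fun_eq_iff)
  then have "associative n d zero_mu"
    by (simp add: associative_def)
  moreover have "vinberg n d zero_mu"
    by (simp add: vinberg_def zero_mu_def ip_def vzero_def)
  moreover have "clifford n d zero_mu"
    unfolding clifford_def
  proof (intro allI impI)
    fix i j k assume "1 \<le> i \<and> i < j \<and> j < k \<and> k \<le> n \<and> d i j \<noteq> 0 \<and> d j k \<noteq> 0"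
    with chain_freeD[OF assms, of i j k] show "clifford_mult (d i j) (d j k) (d i k) (zero_mu i j k) \<or>
        clifford_mult (d j k) (d i j) (d i k) (\<lambda>y x. zero_mu i j k x y)"
      by simp
  qed
  ultimately show ?thesis
    using quasiNil_zero_mu[OF assms] by (simp add: clifford_nil_algebra_def nil_algebra_def)
qed

definition has_chain :: "nat \<Rightarrow> dimfam \<Rightarrow> nat \<Rightarrow> bool" where
  "has_chain n d m \<longleftrightarrow> (\<exists>\<iota>::nat \<Rightarrow> nat. (\<forall>r\<le>m. 1 \<le> \<iota> r \<and> \<iota> r \<le> n) \<and>
     (\<forall>r<m. \<iota> r < \<iota> (Suc r) \<and> d (\<iota> r) (\<iota> (Suc r)) \<noteq> 0))"

lemma nil_index_eq_Greatest_has_chain: "nil_index n d = (GREATEST m. has_chain n d m)"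
  by (simp add: nil_index_def has_chain_def)

lemma has_chain_less:
  assumes "has_chain n d m"
  shows "m < n"
proof -
  obtain \<iota> :: "nat \<Rightarrow> nat" where bounds: "\<forall>r\<le>m. 1 \<le> \<iota> r \<and> \<iota> r \<le> n"
    and increasing: "\<forall>r<m. \<iota> r < \<iota> (Suc r)"
    using assms unfolding has_chain_def by blast
  have "r + 1 \<le> \<iota> r" if "r \<le> m" for r
    using that
  proof (induction r)
    case 0
    then show ?case using bounds by simp
  next
    case (Suc r)
    then have "r + 1 \<le> \<iota> r" "\<iota> r < \<iota> (Suc r)" using increasing by auto
    then show ?case by simp
  qed
  then have "m + 1 \<le> \<iota> m" by simp
  moreover have "\<iota> m \<le> n" using bounds by simp
  ultimately show ?thesis by simp
qed

lemma has_chain_mono: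
  assumes "has_chain n d m'" "m \<le> m'"
  shows "has_chain n d m"
proof -
  from assms(1) obtain \<iota> :: "nat \<Rightarrow> nat" where "\<forall>r\<le>m'. 1 \<le> \<iota> r \<and> \<iota> r \<le> n"
    "\<forall>r<m'. \<iota> r < \<iota> (Suc r) \<and> d (\<iota> r) (\<iota> (Suc r)) \<noteq> 0"
    unfolding has_chain_def by blast
  with assms(2) show ?thesis
    unfolding has_chain_def by (intro exI[of _ \<iota>]) auto
qed

lemma has_chain_1_iff:
  "has_chain n d 1 \<longleftrightarrow> (\<exists>i\<in>{1..n}. \<exists>j\<in>{1..n}. i < j \<and> d i j \<noteq> 0)"
proof
  assume "has_chain n d 1"
  then obtain \<iota> where "\<forall>r\<le>1. 1 \<le> \<iota> r \<and> \<iota> r \<le> n" "\<iota> 0 < \<iota> (Suc 0)"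
    "d (\<iota> 0) (\<iota> (Suc 0)) \<noteq> 0"
    unfolding has_chain_def by auto
  then show "\<exists>i\<in>{1..n}. \<exists>j\<in>{1..n}. i < j \<and> d i j \<noteq> 0"
    by (metis One_nat_def atLeastAtMost_iff le_refl zero_le)
next
  assume "\<exists>i\<in>{1..n}. \<exists>j\<in>{1..n}. i < j \<and> d i j \<noteq> 0"
  then obtain i j where "i \<in> {1..n}" "j \<in> {1..n}" "i < j" "d i j \<noteq> 0" by blast
  then show "has_chain n d 1"
    unfolding has_chain_def by (intro exI[of _ "\<lambda>r. if r = 0 then i else j"]) auto
qed

lemma has_chain_2_iff: "has_chain n d 2 \<longleftrightarrow> \<not> chain_free n d"
proof
  assume "has_chain n d 2"
  then obtain \<iota> :: "nat \<Rightarrow> nat" where bounds: "\<forall>r\<le>2. 1 \<le> \<iota> r \<and> \<iota> r \<le> n"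
    and steps: "\<forall>r<2. \<iota> r < \<iota> (Suc r) \<and> d (\<iota> r) (\<iota> (Suc r)) \<noteq> 0"
    unfolding has_chain_def by blast
  have "\<iota> 0 < \<iota> 1" "d (\<iota> 0) (\<iota> 1) \<noteq> 0" "\<iota> 1 < \<iota> 2" "d (\<iota> 1) (\<iota> 2) \<noteq> 0"
    using steps[rule_format, of 0] steps[rule_format, of 1] by (simp_all add: numeral_2_eq_2)
  moreover have "1 \<le> \<iota> 0" "\<iota> 2 \<le> n"
    using bounds by auto
  ultimately show "\<not> chain_free n d"
    using chain_freeD[of n d "\<iota> 0" "\<iota> 1" "\<iota> 2"] by auto
next
  assume "\<not> chain_free n d"
  then obtain i j k where "i \<in> {1..n}" "j \<in> {1..n}" "k \<in> {1..n}" "i < j" "j < k"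
    "d i j \<noteq> 0" "d j k \<noteq> 0"
    unfolding chain_free_def by blast
  then show "has_chain n d 2"
    unfolding has_chain_def
    by (intro exI[of _ "\<lambda>r. if r = 0 then i else if r = 1 then j else k"])
       (auto simp: numeral_2_eq_2 le_Suc_eq less_Suc_eq)
qed

lemma nil_index_eq_1_iff:
  assumes "0 < n"
  shows "nil_index n d = 1 \<longleftrightarrow>
    chain_free n d \<and> (\<exists>i\<in>{1..n}. \<exists>j\<in>{1..n}. i < j \<and> d i j \<noteq> 0)"
proof
  assume one: "nil_index n d = 1"
  have bounded: "m \<le> n" if "has_chain n d m" for m
    using has_chain_less[OF that] by simp
  have "has_chain n d 0"
    unfolding has_chain_def using assms by (intro exI[of _ "\<lambda>r. 1"]) auto
  then have "has_chain n d 1"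
    using GreatestI_nat[of "has_chain n d" 0 n] bounded one
    by (simp add: nil_index_eq_Greatest_has_chain)
  moreover have "\<not> has_chain n d 2"
    using Greatest_le_nat[of "has_chain n d" 2 n] bounded one
    by (auto simp: nil_index_eq_Greatest_has_chain)
  ultimately show "chain_free n d \<and> (\<exists>i\<in>{1..n}. \<exists>j\<in>{1..n}. i < j \<and> d i j \<noteq> 0)"
    using has_chain_1_iff has_chain_2_iff by blast
next
  assume "chain_free n d \<and> (\<exists>i\<in>{1..n}. \<exists>j\<in>{1..n}. i < j \<and> d i j \<noteq> 0)"
  then have "has_chain n d 1" and "\<not> has_chain n d 2"
    using has_chain_1_iff has_chain_2_iff by blast+
  then have "m \<le> 1" if "has_chain n d m" for m
    using has_chain_mono[OF that, of 2] by fastforce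
  then show "nil_index n d = 1"
    unfolding nil_index_eq_Greatest_has_chain using \<open>has_chain n d 1\<close> by (intro Greatest_equality)
qed

lemma vecs_0: "vecs 0 = {vzero}"
  by (auto simp: vecs_def vzero_def)

lemma infinite_vecs:
  assumes "0 < a"
  shows "infinite (vecs a)"
proof
  assume "finite (vecs a)"
  moreover have "(\<lambda>r t. if t = 0 then r else 0) ` UNIV \<subseteq> vecs a"
    using assms by (auto simp: vecs_def)
  moreover have "inj (\<lambda>(r::real) t. if t = (0::nat) then r else 0)"
    by (auto simp: inj_def fun_eq_iff)
  ultimately show False
    using infinite_UNIV_char_0 by (metis finite_imageD finite_subset)
qed

lemma card_vecs: "card (vecs a) = (if a = 0 then 1 else 0)"
  using infinite_vecs[of a] by (simp add: vecs_0)

lemma isomorphic_identity: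
  assumes "\<forall>i j. 1 \<le> i \<and> i < j \<and> j \<le> n \<longrightarrow> d' i j = d i j"
    and "\<forall>i j k. 1 \<le> i \<and> i < j \<and> j < k \<and> k \<le> n \<longrightarrow>
      (\<forall>x\<in>vecs (d i j). \<forall>y\<in>vecs (d j k). \<mu>' i j k x y = \<mu> i j k x y)"
  shows "isomorphic n d \<mu> d' \<mu>'"
  unfolding isomorphic_def using assms
  by (intro exI[of _ "\<lambda>i j x. x"]) (simp add: linear_on_def bij_betw_id[unfolded id_def])

context
  fixes n :: nat and \<tau> :: "nat \<Rightarrow> nat"
  assumes \<tau>: "bij_betw \<tau> {1..n} {1..n}"
begin

lemma renumbering_inv_into:
  assumes "order_compatible n \<tau> d"
  shows "renumbering n d (inv_into {1..n} \<tau>)"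
  unfolding renumbering_def
proof (intro conjI bij_betw_inv_into[OF \<tau>] allI impI)
  fix i j assume ij: "1 \<le> i \<and> i < j \<and> j \<le> n \<and> d i j \<noteq> 0"
  have inverse: "\<tau> (inv_into {1..n} \<tau> k) = k" "inv_into {1..n} \<tau> k \<in> {1..n}"
    if "k \<in> {1..n}" for k
    using bij_betw_inv_into_right[OF \<tau> that] bij_betwE[OF bij_betw_inv_into[OF \<tau>]] that by auto
  from ij have "i \<in> {1..n}" "j \<in> {1..n}" by auto
  with ij inverse show "inv_into {1..n} \<tau> i < inv_into {1..n} \<tau> j"
    using assms unfolding order_compatible_def by simp
qed

lemma renum_d_inv_into:
  assumes "p \<in> {1..n}" "q \<in> {1..n}"
  shows "renum_d n (inv_into {1..n} \<tau>) d p q = relabel \<tau> d p q"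
  unfolding renum_d_def relabel_def Let_def
    inv_into_inv_into_eq[OF \<tau> assms(1)] inv_into_inv_into_eq[OF \<tau> assms(2)] ..

lemma renum_mu_inv_into_eq_vzero:
  assumes "quasiNil n d \<mu>" "chain_free n d"
    and pqr: "p \<in> {1..n}" "q \<in> {1..n}" "r \<in> {1..n}"
    and "x \<in> vecs (relabel \<tau> d p q)" "y \<in> vecs (relabel \<tau> d q r)"
  shows "renum_mu n (inv_into {1..n} \<tau>) \<mu> p q r x y = vzero"
proof (cases "\<tau> p < \<tau> q \<and> \<tau> q < \<tau> r")
  case True
  have "\<tau> p \<in> {1..n}" "\<tau> r \<in> {1..n}"
    using pqr \<tau> by (auto dest: bij_betwE)
  moreover have "x \<in> vecs (d (\<tau> p) (\<tau> q))" "y \<in> vecs (d (\<tau> q) (\<tau> r))"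
    using assms True by (simp_all add: relabel_def)
  ultimately have "\<mu> (\<tau> p) (\<tau> q) (\<tau> r) x y = vzero"
    using True assms(1,2) by (intro mu_eq_vzero_if_chain_free) auto
  with True show ?thesis
    unfolding renum_mu_def Let_def inv_into_inv_into_eq[OF \<tau> pqr(1)]
      inv_into_inv_into_eq[OF \<tau> pqr(2)] inv_into_inv_into_eq[OF \<tau> pqr(3)]
    by simp
next
  case False
  then show ?thesis
    unfolding renum_mu_def Let_def inv_into_inv_into_eq[OF \<tau> pqr(1)]
      inv_into_inv_into_eq[OF \<tau> pqr(2)] inv_into_inv_into_eq[OF \<tau> pqr(3)]
    by auto
qed

lemma equivalent_relabel:
  assumes "quasiNil n d \<mu>" "chain_free n d" "order_compatible n \<tau> d"
    and D: "\<forall>p\<in>{1..n}. \<forall>q\<in>{1..n}. p < q \<longrightarrow> D p q = relabel \<tau> d p q"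
  shows "equivalent n d \<mu> D zero_mu"
proof -
  let ?\<sigma> = "inv_into {1..n} \<tau>"
  have "isomorphic n (renum_d n ?\<sigma> d) (renum_mu n ?\<sigma> \<mu>) D zero_mu"
    using D renum_d_inv_into renum_mu_inv_into_eq_vzero[OF assms(1,2)]
    by (intro isomorphic_identity) (simp_all add: zero_mu_def)
  then show ?thesis
    unfolding equivalent_def using renumbering_inv_into[OF assms(3)] by blast
qed

end

lemma dsum_mu_zero_mu: "dsum_mu m zero_mu zero_mu = zero_mu"
  by (simp add: dsum_mu_def zero_mu_def fun_eq_iff)

lemma dual_mu_zero_mu: "dual_mu n zero_mu = zero_mu"
  by (simp add: dual_mu_def zero_mu_def fun_eq_iff)

definition block_diagonal :: "nat \<Rightarrow> nat \<Rightarrow> dimfam \<Rightarrow> bool" where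
  "block_diagonal n m d \<longleftrightarrow> (\<forall>p\<in>{1..n}. \<forall>q\<in>{1..n}. p \<le> m \<and> m < q \<longrightarrow> d p q = 0)"

lemma not_indecomposable_if_block_diagonal:
  assumes "quasiNil n d \<mu>" "chain_free n d"
    and \<tau>: "bij_betw \<tau> {1..n} {1..n}" "order_compatible n \<tau> d"
    and m: "0 < m" "m < n" and blocks: "block_diagonal n m (relabel \<tau> d)"
  shows "\<not> indecomposable n d \<mu>"
proof -
  define e where "e = relabel \<tau> d"
  define e2 where "e2 i j = e (i + m) (j + m)" for i j
  have "chain_free n e"
    unfolding e_def using assms(2) \<tau>(1) by (intro chain_free_relabel) (auto dest: bij_betwE)
  then have "quasiNil m e zero_mu" "quasiNil (n - m) e2 zero_mu"
    unfolding e2_def using m chain_free_mono chain_free_shift quasiNil_zero_mu by simp_all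
  moreover have "equivalent n d \<mu> (dsum_d m e e2) (dsum_mu m zero_mu zero_mu)"
    unfolding dsum_mu_zero_mu
  proof (rule equivalent_relabel[OF \<tau>(1) assms(1,2) \<tau>(2)], intro ballI impI)
    fix p q assume "p \<in> {1..n}" "q \<in> {1..n}" "p < q"
    then show "dsum_d m e e2 p q = relabel \<tau> d p q"
      using blocks unfolding block_diagonal_def dsum_d_def e2_def e_def by auto
  qed
  moreover have "n = m + (n - m)" "0 < n - m"
    using m by simp_all
  ultimately show ?thesis
    unfolding indecomposable_def using m(1) by blast
qed

definition connected_support :: "nat \<Rightarrow> dimfam \<Rightarrow> bool" where
  "connected_support n d \<longleftrightarrow> (\<forall>b :: nat \<Rightarrow> bool.
     (\<forall>i\<in>{1..n}. \<forall>j\<in>{1..n}. i < j \<and> d i j \<noteq> 0 \<longrightarrow> b i = b j) \<longrightarrow>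
     (\<forall>i\<in>{1..n}. \<forall>j\<in>{1..n}. b i = b j))"

lemma equivalent_obtains_renumbering:
  assumes "equivalent n d \<mu> d' \<mu>'"
  obtains \<sigma> where "bij_betw \<sigma> {1..n} {1..n}"
    "\<forall>i\<in>{1..n}. \<forall>j\<in>{1..n}. i < j \<and> d i j \<noteq> 0 \<longrightarrow> \<sigma> i < \<sigma> j \<and> d' (\<sigma> i) (\<sigma> j) \<noteq> 0"
proof -
  obtain \<sigma> \<phi> where renumbering: "renumbering n d \<sigma>"
    and \<phi>: "\<forall>i j. 1 \<le> i \<and> i < j \<and> j \<le> n \<longrightarrow>
        linear_on (renum_d n \<sigma> d i j) (d' i j) (\<phi> i j) \<and>
        bij_betw (\<phi> i j) (vecs (renum_d n \<sigma> d i j)) (vecs (d' i j)) \<and>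
        (\<forall>x\<in>vecs (renum_d n \<sigma> d i j). nrm (d' i j) (\<phi> i j x) = nrm (renum_d n \<sigma> d i j) x)"
    using assms unfolding equivalent_def isomorphic_def by (elim exE conjE) blast
  have \<sigma>: "bij_betw \<sigma> {1..n} {1..n}"
    using renumbering unfolding renumbering_def by blast
  moreover have "\<forall>i\<in>{1..n}. \<forall>j\<in>{1..n}. i < j \<and> d i j \<noteq> 0 \<longrightarrow> \<sigma> i < \<sigma> j \<and> d' (\<sigma> i) (\<sigma> j) \<noteq> 0"
  proof (intro ballI impI)
    fix i j assume "i \<in> {1..n}" "j \<in> {1..n}" "i < j \<and> d i j \<noteq> 0"
    then have ij: "i \<in> {1..n}" "j \<in> {1..n}" "i < j" "d i j \<noteq> 0" by auto
    have "\<sigma> i < \<sigma> j" "\<sigma> i \<in> {1..n}" "\<sigma> j \<in> {1..n}"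
      using ij renumbering \<sigma> unfolding renumbering_def by (auto dest: bij_betwE)
    moreover have "renum_d n \<sigma> d (\<sigma> i) (\<sigma> j) = d i j"
      using ij \<sigma> by (simp add: renum_d_def bij_betw_inv_into_left)
    ultimately show "\<sigma> i < \<sigma> j \<and> d' (\<sigma> i) (\<sigma> j) \<noteq> 0"
      using \<phi> ij bij_betw_same_card card_vecs by (metis atLeastAtMost_iff one_neq_zero)
  qed
  ultimately show thesis
    using that by blast
qed

lemma indecomposable_if_connected_support:
  assumes "connected_support n d"
  shows "indecomposable n d \<mu>"
  unfolding indecomposable_def
proof
  assume "\<exists>n1 d1 \<mu>1 n2 d2 \<mu>2. 0 < n1 \<and> 0 < n2 \<and> n = n1 + n2 \<and> quasiNil n1 d1 \<mu>1 \<and>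
      quasiNil n2 d2 \<mu>2 \<and> equivalent n d \<mu> (dsum_d n1 d1 d2) (dsum_mu n1 \<mu>1 \<mu>2)"
  then obtain n1 n2 d1 d2 \<mu>1 \<mu>2 where n: "0 < n1" "0 < n2" "n = n1 + n2"
    and equivalent: "equivalent n d \<mu> (dsum_d n1 d1 d2) (dsum_mu n1 \<mu>1 \<mu>2)"
    by blast
  obtain \<sigma> where \<sigma>: "bij_betw \<sigma> {1..n} {1..n}"
    and edges: "\<forall>i\<in>{1..n}. \<forall>j\<in>{1..n}. i < j \<and> d i j \<noteq> 0 \<longrightarrow>
      \<sigma> i < \<sigma> j \<and> dsum_d n1 d1 d2 (\<sigma> i) (\<sigma> j) \<noteq> 0"
    using equivalent by (rule equivalent_obtains_renumbering)
  define b where "b i \<longleftrightarrow> \<sigma> i \<le> n1" for i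
  have "b i = b j" if "i \<in> {1..n}" "j \<in> {1..n}" "i < j" "d i j \<noteq> 0" for i j
  proof -
    from edges that have "\<sigma> i < \<sigma> j" "dsum_d n1 d1 d2 (\<sigma> i) (\<sigma> j) \<noteq> 0"
      by blast+
    then show ?thesis
      unfolding b_def dsum_d_def by (auto split: if_splits)
  qed
  then have b_constant: "\<forall>i\<in>{1..n}. \<forall>j\<in>{1..n}. b i = b j"
    using assms unfolding connected_support_def by (elim allE[of _ b]) blast
  have "1 \<in> \<sigma> ` {1..n}" "n \<in> \<sigma> ` {1..n}"
    using \<sigma> n by (auto simp: bij_betw_def)
  then obtain i j where "i \<in> {1..n}" "\<sigma> i = 1" "j \<in> {1..n}" "\<sigma> j = n"
    by (metis imageE)
  moreover have "b i" "\<not> b j" if "\<sigma> i = 1" "\<sigma> j = n"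
    using n that by (auto simp: b_def)
  ultimately show False
    using b_constant by blast
qed

definition same_support :: "nat \<Rightarrow> dimfam \<Rightarrow> dimfam \<Rightarrow> bool" where
  "same_support n d d' \<longleftrightarrow> (\<forall>p\<in>{1..n}. \<forall>q\<in>{1..n}. p < q \<longrightarrow> (d p q = 0 \<longleftrightarrow> d' p q = 0))"

definition perm4 :: "nat \<Rightarrow> nat \<Rightarrow> nat \<Rightarrow> nat \<Rightarrow> nat \<Rightarrow> nat" where
  "perm4 a b c e p = (if p = 1 then a else if p = 2 then b else if p = 3 then c else e)"

lemma atLeastAtMost_1_4: "{1..4::nat} = {1, 2, 3, 4}"
  by auto

lemma bij_betw_perm4:
  assumes "distinct [a, b, c, e]" "{a, b, c, e} \<subseteq> {1..4}"
  shows "bij_betw (perm4 a b c e) {1..4} {1..4}"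
proof -
  have "inj_on (perm4 a b c e) {1..4}"
    unfolding atLeastAtMost_1_4 using assms(1) by (auto simp: inj_on_def perm4_def)
  moreover have "perm4 a b c e ` {1..4} \<subseteq> {1..4}"
    using assms(2) by (auto simp: atLeastAtMost_1_4 perm4_def)
  ultimately show ?thesis
    by (simp add: bij_betw_def endo_inj_surj)
qed

definition standard_support :: "dimfam \<Rightarrow> bool" where
  "standard_support e \<longleftrightarrow>
     same_support 4 e (pat1 1 1 1) \<or> same_support 4 e (dual_d 4 (pat1 1 1 1)) \<or>
     same_support 4 e (pat2 1 1 1) \<or> same_support 4 e (pat3 1 1 1 1)"

lemma chain_free_rank4_cases:
  assumes "chain_free 4 d"
  obtains (decomposes) \<tau> m where "bij_betw \<tau> {1..4} {1..4}" "order_compatible 4 \<tau> d"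
      "0 < m" "m < 4" "block_diagonal 4 m (relabel \<tau> d)"
    | (standard) \<tau> where "bij_betw \<tau> {1..4} {1..4}" "order_compatible 4 \<tau> d"
      "standard_support (relabel \<tau> d)"
proof -
  let ?candidates = "{perm4 1 2 3 4, perm4 1 2 4 3, perm4 1 3 2 4, perm4 1 3 4 2, perm4 1 4 2 3,
      perm4 2 1 3 4, perm4 2 1 4 3}"
  have "\<exists>\<tau>\<in>?candidates. order_compatible 4 \<tau> d \<and>
      ((\<exists>m\<in>{1, 2, 3}. block_diagonal 4 m (relabel \<tau> d)) \<or> standard_support (relabel \<tau> d))"
    \<comment> \<open>Simplifying before the case split reduces every candidate to a boolean condition on the
      six blocks; these seven candidates cover all 64 supports.\<close>
    using assms
    unfolding chain_free_def order_compatible_def block_diagonal_def standard_support_def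
      same_support_def atLeastAtMost_1_4
    apply (simp add: relabel_def perm4_def pat1_def pat2_def pat3_def dual_d_def)
    apply (cases "d 1 2 = 0"; cases "d 1 3 = 0"; cases "d 1 4 = 0";
        cases "d 2 3 = 0"; cases "d 2 4 = 0"; cases "d 3 4 = 0"; simp)
    done
  then obtain \<tau> where "\<tau> \<in> ?candidates" and compatible: "order_compatible 4 \<tau> d"
    and cases: "(\<exists>m\<in>{1, 2, 3}. block_diagonal 4 m (relabel \<tau> d)) \<or> standard_support (relabel \<tau> d)"
    by blast
  from \<open>\<tau> \<in> ?candidates\<close> have bij: "bij_betw \<tau> {1..4} {1..4}"
    by (auto intro: bij_betw_perm4 simp del: One_nat_def)
  from cases show thesis
  proof
    assume "\<exists>m\<in>{1, 2, 3}. block_diagonal 4 m (relabel \<tau> d)"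
    then obtain m where "m \<in> {1, 2, 3}" "block_diagonal 4 m (relabel \<tau> d)"
      by blast
    then show thesis
      by (intro decomposes[OF bij compatible]) auto
  next
    assume "standard_support (relabel \<tau> d)"
    then show thesis
      by (rule standard[OF bij compatible])
  qed
qed

lemma equiv_or_dual_pattern_if_standard_support:
  assumes "quasiNil 4 d \<mu>" "chain_free 4 d" "bij_betw \<tau> {1..4} {1..4}" "order_compatible 4 \<tau> d"
    and "standard_support (relabel \<tau> d)"
  shows "\<exists>v1 v2 v3 v4. 0 < v1 \<and> 0 < v2 \<and> 0 < v3 \<and> 0 < v4 \<and>
    (equiv_or_dual 4 d \<mu> (pat1 v1 v2 v3) zero_mu \<or>
     equiv_or_dual 4 d \<mu> (pat2 v1 v2 v3) zero_mu \<or>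
     equiv_or_dual 4 d \<mu> (pat3 v1 v2 v3 v4) zero_mu)"
proof -
  define e where "e = relabel \<tau> d"
  have equivalent: "equivalent 4 d \<mu> D zero_mu"
    if "\<forall>p\<in>{1, 2, 3, 4}. \<forall>q\<in>{1, 2, 3, 4}. p < q \<longrightarrow> D p q = e p q" for D
    using equivalent_relabel[OF assms(3,1,2,4)] that unfolding e_def atLeastAtMost_1_4 by blast
  from assms(5)[folded e_def, unfolded standard_support_def same_support_def atLeastAtMost_1_4]
  show ?thesis
  proof (elim disjE)
    assume "\<forall>p\<in>{1, 2, 3, 4}. \<forall>q\<in>{1, 2, 3, 4}. p < q \<longrightarrow> (e p q = 0 \<longleftrightarrow> pat1 1 1 1 p q = 0)"
    then have "0 < e 1 2" "0 < e 1 3" "0 < e 1 4"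
      "equivalent 4 d \<mu> (pat1 (e 1 2) (e 1 3) (e 1 4)) zero_mu"
      by (auto intro!: equivalent simp: pat1_def)
    then show ?thesis
      unfolding equiv_or_dual_def
      by (intro exI[of _ "e 1 2"] exI[of _ "e 1 3"] exI[of _ "e 1 4"] exI[of _ 1]) auto
  next
    assume "\<forall>p\<in>{1, 2, 3, 4}. \<forall>q\<in>{1, 2, 3, 4}. p < q \<longrightarrow> (e p q = 0 \<longleftrightarrow> dual_d 4 (pat1 1 1 1) p q = 0)"
    then have "0 < e 3 4" "0 < e 2 4" "0 < e 1 4"
      "equivalent 4 d \<mu> (dual_d 4 (pat1 (e 3 4) (e 2 4) (e 1 4))) (dual_mu 4 zero_mu)"
      unfolding dual_mu_zero_mu by (auto intro!: equivalent simp: pat1_def dual_d_def)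
    then show ?thesis
      unfolding equiv_or_dual_def
      by (intro exI[of _ "e 3 4"] exI[of _ "e 2 4"] exI[of _ "e 1 4"] exI[of _ 1]) auto
  next
    assume "\<forall>p\<in>{1, 2, 3, 4}. \<forall>q\<in>{1, 2, 3, 4}. p < q \<longrightarrow> (e p q = 0 \<longleftrightarrow> pat2 1 1 1 p q = 0)"
    then have "0 < e 1 3" "0 < e 1 4" "0 < e 2 4"
      "equivalent 4 d \<mu> (pat2 (e 1 3) (e 1 4) (e 2 4)) zero_mu"
      by (auto intro!: equivalent simp: pat2_def)
    then show ?thesis
      unfolding equiv_or_dual_def
      by (intro exI[of _ "e 1 3"] exI[of _ "e 1 4"] exI[of _ "e 2 4"] exI[of _ 1]) auto
  next
    assume "\<forall>p\<in>{1, 2, 3, 4}. \<forall>q\<in>{1, 2, 3, 4}. p < q \<longrightarrow> (e p q = 0 \<longleftrightarrow> pat3 1 1 1 1 p q = 0)"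
    then have "0 < e 1 3" "0 < e 1 4" "0 < e 2 3" "0 < e 2 4"
      "equivalent 4 d \<mu> (pat3 (e 1 3) (e 1 4) (e 2 3) (e 2 4)) zero_mu"
      by (auto intro!: equivalent simp: pat3_def)
    then show ?thesis
      unfolding equiv_or_dual_def
      by (intro exI[of _ "e 1 3"] exI[of _ "e 1 4"] exI[of _ "e 2 3"] exI[of _ "e 2 4"]) auto
  qed
qed

lemma connected_support_rank4I:
  assumes "D 1 3 \<noteq> 0" "D 1 4 \<noteq> 0" "D 1 2 \<noteq> 0 \<or> D 2 4 \<noteq> 0"
  shows "connected_support 4 D"
  unfolding connected_support_def
proof (intro allI impI)
  fix b :: "nat \<Rightarrow> bool"
  assume "\<forall>i\<in>{1..4}. \<forall>j\<in>{1..4}. i < j \<and> D i j \<noteq> 0 \<longrightarrow> b i = b j"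
  then have "b 1 = b 3" "b 1 = b 4" "b 1 = b 2"
    using assms unfolding atLeastAtMost_1_4 by auto
  then show "\<forall>i\<in>{1..4}. \<forall>j\<in>{1..4}. b i = b j"
    unfolding atLeastAtMost_1_4 by simp
qed

lemma indecomposable_nil_index_1_rank4_classification:
  assumes "clifford_nil_algebra 4 d \<mu>" "indecomposable 4 d \<mu>" "nil_index 4 d = 1"
  shows "\<exists>v1 v2 v3 v4. 0 < v1 \<and> 0 < v2 \<and> 0 < v3 \<and> 0 < v4 \<and>
    (equiv_or_dual 4 d \<mu> (pat1 v1 v2 v3) zero_mu \<or>
     equiv_or_dual 4 d \<mu> (pat2 v1 v2 v3) zero_mu \<or>
     equiv_or_dual 4 d \<mu> (pat3 v1 v2 v3 v4) zero_mu)"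
proof -
  have quasiNil: "quasiNil 4 d \<mu>"
    using assms(1) by (simp add: clifford_nil_algebra_def nil_algebra_def)
  have chain_free: "chain_free 4 d"
    using assms(3) nil_index_eq_1_iff[of 4 d] by simp
  from chain_free show ?thesis
  proof (cases rule: chain_free_rank4_cases)
    case (decomposes \<tau> m)
    then have "\<not> indecomposable 4 d \<mu>"
      by (rule not_indecomposable_if_block_diagonal[OF quasiNil chain_free])
    with assms(2) show ?thesis by contradiction
  next
    case (standard \<tau>)
    then show ?thesis
      by (rule equiv_or_dual_pattern_if_standard_support[OF quasiNil chain_free])
  qed
qed

lemma standard_patterns_indecomposable:
  assumes "0 < v1" "0 < v2" "0 < v3" "0 < v4"
    and "D \<in> {pat1 v1 v2 v3, pat2 v1 v2 v3, pat3 v1 v2 v3 v4}"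
  shows "clifford_nil_algebra 4 D zero_mu \<and> indecomposable 4 D zero_mu \<and> nil_index 4 D = 1"
proof -
  have "chain_free 4 D"
    using assms unfolding chain_free_def atLeastAtMost_1_4 by (auto simp: pat1_def pat2_def pat3_def)
  moreover have "connected_support 4 D" "D 1 4 \<noteq> 0"
    using assms by (auto intro!: connected_support_rank4I simp: pat1_def pat2_def pat3_def)
  ultimately show ?thesis
    using nil_index_eq_1_iff[of 4 D]
    by (auto simp: clifford_nil_algebra_zero_mu indecomposable_if_connected_support)
qed

theorem theorem1:
  shows "(\<forall>(d::dimfam) (\<mu>::mulfam).
            clifford_nil_algebra 4 d \<mu> \<and> indecomposable 4 d \<mu> \<and> nil_index 4 d = 1 \<longrightarrow>
            (\<exists>v1 v2 v3 v4. 0 < v1 \<and> 0 < v2 \<and> 0 < v3 \<and> 0 < v4 \<and>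
               (equiv_or_dual 4 d \<mu> (pat1 v1 v2 v3) zero_mu \<or>
                equiv_or_dual 4 d \<mu> (pat2 v1 v2 v3) zero_mu \<or>
                equiv_or_dual 4 d \<mu> (pat3 v1 v2 v3 v4) zero_mu))) \<and>
         (\<forall>v1 v2 v3 v4. 0 < v1 \<and> 0 < v2 \<and> 0 < v3 \<and> 0 < v4 \<longrightarrow>
            (\<forall>D \<in> {pat1 v1 v2 v3, pat2 v1 v2 v3, pat3 v1 v2 v3 v4}.
               clifford_nil_algebra 4 D zero_mu \<and> indecomposable 4 D zero_mu \<and>
               nil_index 4 D = 1))"
proof (rule conjI; intro allI impI)
  fix d \<mu> assume "clifford_nil_algebra 4 d \<mu> \<and> indecomposable 4 d \<mu> \<and> nil_index 4 d = 1"
  then show "\<exists>v1 v2 v3 v4. 0 < v1 \<and> 0 < v2 \<and> 0 < v3 \<and> 0 < v4 \<and>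
      (equiv_or_dual 4 d \<mu> (pat1 v1 v2 v3) zero_mu \<or>
       equiv_or_dual 4 d \<mu> (pat2 v1 v2 v3) zero_mu \<or>
       equiv_or_dual 4 d \<mu> (pat3 v1 v2 v3 v4) zero_mu)"
    by (elim conjE) (rule indecomposable_nil_index_1_rank4_classification)
next
  fix v1 v2 v3 v4 :: nat assume "0 < v1 \<and> 0 < v2 \<and> 0 < v3 \<and> 0 < v4"
  then show "\<forall>D \<in> {pat1 v1 v2 v3, pat2 v1 v2 v3, pat3 v1 v2 v3 v4}.
      clifford_nil_algebra 4 D zero_mu \<and> indecomposable 4 D zero_mu \<and> nil_index 4 D = 1"
    using standard_patterns_indecomposable[of v1 v2 v3 v4] by blast
qed

end
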